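(* Let $\alpha>0$ and let $I^\alpha(\mathrm P)$ be the function on $\mathbb R^d$ with Fourier transform $\xi\mapsto|\xi|^\alpha e^{-2\pi|\xi|}$. Then there exists $\sigma>0$ such that the function $s\mapsto(1+|s|^2)^{\frac{d+\sigma}2}\,I^\alpha(\mathrm P)(s)$ belongs to $L_\infty(\mathbb R^d)$.
   Context: Fourier transform convention: $\widehat g(\xi)=\int_{\mathbb R^d}g(s)e^{-2\pi{\rm i}s\cdot\xi}ds$. $\mathrm P$ is the Poisson kernel $\mathrm P(s)=c_d(1+|s|^2)^{-(d+1)/2}$, whose Fourier transform is $e^{-2\pi|\xi|}$, and $I^\alpha$ is the Riesz potential, the Fourier multiplier with symbol $|\xi|^\alpha$. *)

theory Defs
  imports "HOL-Analysis.Analysis"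
begin

text \<open>The function I^alpha(P) on R^d (R^d modelled by a euclidean_space type 'a,
  d = DIM('a)), defined by Fourier inversion of its (integrable) Fourier transform
  xi |-> |xi|^alpha * exp(-2 pi |xi|), with convention ghat(xi) = int g(s) e^(-2 pi i s.xi) ds.\<close>
definition riesz_poisson :: "real \<Rightarrow> 'a::euclidean_space \<Rightarrow> complex" where
  "riesz_poisson \<alpha> s =
     (LINT \<xi>|lborel. complex_of_real (norm \<xi> powr \<alpha> * exp (- 2 * pi * norm \<xi>))
                      * exp (2 * pi * \<i> * complex_of_real (s \<bullet> \<xi>)))"

end

theory Submission
  imports Defs
begin

text \<open>Fix \<open>s\<close> with \<open>|s| \<ge> 1\<close> and put \<open>u = s/|s|\<close>, \<open>t = 1/(2|s|)\<close>. Translation by \<open>t u\<close>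
  changes the sign of \<open>e^(2\<pi>i s\<cdot>\<xi>)\<close>, so the \<open>k\<close>-th forward difference of the symbol
  \<open>|\<xi>|^\<alpha> e^(-2\<pi>|\<xi>|)\<close> in direction \<open>u\<close> with step \<open>t\<close> has Fourier integral \<open>(-2)^k I^\<alpha>(P)(s)\<close>.
  For \<open>k > d + \<alpha>\<close> the \<open>L\<^sub>1\<close> norm of this difference is \<open>O(t^(d+\<alpha>))\<close>: on the ball
  \<open>|\<xi>| < 2kt\<close> the symbol is \<open>O(t^\<alpha>)\<close> on a set of volume \<open>O(t^d)\<close>, and outside it the
  difference is at most \<open>t^k\<close> times the \<open>k\<close>-th derivative along the ray, which is
  \<open>O(|\<xi>|^(\<alpha>-k))\<close> plus an exponentially small term. Hence \<open>I^\<alpha>(P)(s) = O(|s|^(-d-\<alpha>))\<close>,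
  and together with the trivial bound \<open>\<parallel>I^\<alpha>(P)\<parallel>\<^sub>\<infinity> \<le> \<parallel>|\<xi>|^\<alpha> e^(-2\<pi>|\<xi>|)\<parallel>\<^sub>1\<close> this gives the
  claim with \<open>\<sigma> = \<alpha>\<close>.\<close>

lemma dyadic_interval_exists:
  fixes a r :: real
  assumes "a > 0" "a \<le> r"
  shows "\<exists>j::nat. 2^j * a \<le> r \<and> r < 2^Suc j * a"
proof -
  obtain n :: nat where "r / a < 2 ^ n" using real_arch_pow[of 2 "r/a"] by auto
  hence ex: "\<exists>n. r < 2^n * a" using assms by (auto simp: field_simps)
  define m where "m = (LEAST n::nat. r < 2^n * a)"
  have m: "r < 2^m * a" unfolding m_def by (rule LeastI_ex) (fact ex)
  then obtain j where j: "m = Suc j" using assms by (cases m) auto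
  have "\<not> r < 2^j * a" using not_less_Least[of j "\<lambda>n. r < 2^n * a"] j m_def by auto
  thus ?thesis using m j by (intro exI[of _ j]) auto
qed

lemma powr_dyadic_shell:
  fixes a \<beta> :: real and d j :: nat
  assumes "a > 0"
  shows "(2^Suc j * a)^d * (2^j * a) powr (-\<beta>)
           = 2^d * a powr (real d - \<beta>) * (2 powr (real d - \<beta>))^j"
proof -
  have "(2^Suc j * a)^d = 2 powr real d * (2^j * a) powr real d"
    using assms by (simp add: powr_realpow[symmetric] powr_mult[symmetric] mult.assoc)
  moreover have "(2^j * a) powr real d * (2^j * a) powr (-\<beta>) = (2^j * a) powr (real d - \<beta>)"
    by (simp add: powr_add[symmetric])
  moreover have "\<dots> = (2 powr (real d - \<beta>))^j * a powr (real d - \<beta>)"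
    using assms by (simp add: powr_mult powr_realpow[symmetric] powr_powr mult.commute)
  ultimately show ?thesis by (simp add: powr_realpow mult_ac)
qed

text \<open>Cover the region \<open>a \<le> |\<xi>|\<close> by the balls of radius \<open>2^(j+1) a\<close>, with \<open>|\<xi>|^(-\<beta>) \<le> (2^j a)^(-\<beta>)\<close>
  on the \<open>j\<close>-th dyadic shell; the resulting series is geometric with ratio \<open>2^(d-\<beta>) < 1\<close>.\<close>
lemma nn_integral_norm_powr_tail_le:
  fixes a \<beta> :: real
  assumes b: "\<beta> > real DIM('a::euclidean_space)" and a: "a > 0"
  shows "(\<integral>\<^sup>+\<xi>. indicator {\<xi>::'a. a \<le> norm \<xi>} \<xi> * ennreal (norm \<xi> powr (-\<beta>)) \<partial>lborel)
     \<le> ennreal (unit_ball_vol (DIM('a)) * 2^DIM('a) / (1 - 2 powr (real DIM('a) - \<beta>))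
                 * a powr (real DIM('a) - \<beta>))"
proof -
  let ?d = "DIM('a)"
  define q where "q = 2 powr (real ?d - \<beta>)"
  have q0: "0 < q" by (simp add: q_def)
  have "2 powr (real ?d - \<beta>) < 2 powr 0" using b by (intro powr_less_mono) auto
  hence q1: "q < 1" by (simp add: q_def)
  define V where "V = unit_ball_vol (real ?d)"
  have V0: "V \<ge> 0" unfolding V_def by (simp add: unit_ball_vol_nonneg)
  define g where "g j \<xi> = ennreal ((2^j * a) powr (-\<beta>)) * indicator (cball (0::'a) (2^Suc j * a)) \<xi>"
    for j \<xi>
  have pointwise: "indicator {\<xi>::'a. a \<le> norm \<xi>} \<xi> * ennreal (norm \<xi> powr (-\<beta>)) \<le> (\<Sum>j. g j \<xi>)"
    for \<xi>
  proof (cases "a \<le> norm \<xi>")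
    case True
    then obtain j where j: "2^j * a \<le> norm \<xi>" "norm \<xi> < 2^Suc j * a"
      using dyadic_interval_exists a by blast
    have "norm \<xi> powr (-\<beta>) \<le> (2^j * a) powr (-\<beta>)"
      using j a b by (intro powr_mono2') auto
    hence "indicator {\<xi>::'a. a \<le> norm \<xi>} \<xi> * ennreal (norm \<xi> powr (-\<beta>)) \<le> g j \<xi>"
      using True j by (auto simp: g_def)
    also have "g j \<xi> \<le> (\<Sum>j. g j \<xi>)"
      using sum_le_suminf[OF summableI, of "{j}" "\<lambda>j. g j \<xi>"] by simp
    finally show ?thesis .
  qed simp
  have shell: "(\<integral>\<^sup>+\<xi>. g j \<xi> \<partial>lborel) = ennreal (V * 2^?d * a powr (real ?d - \<beta>) * q^j)" for j
  proof -
    have "(\<integral>\<^sup>+\<xi>. g j \<xi> \<partial>lborel)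
            = ennreal ((2^j * a) powr (-\<beta>) * (V * (2^Suc j * a)^?d))"
      using a by (simp add: g_def nn_integral_cmult_indicator emeasure_cball V_def ennreal_mult')
    also have "(2^j * a) powr (-\<beta>) * (V * (2^Suc j * a)^?d) = V * 2^?d * a powr (real ?d - \<beta>) * q^j"
      using powr_dyadic_shell[OF a, of j ?d \<beta>] by (simp add: q_def mult_ac)
    finally show ?thesis .
  qed
  have "(\<integral>\<^sup>+\<xi>. indicator {\<xi>::'a. a \<le> norm \<xi>} \<xi> * ennreal (norm \<xi> powr (-\<beta>)) \<partial>lborel)
      \<le> (\<integral>\<^sup>+\<xi>. (\<Sum>j. g j \<xi>) \<partial>lborel)"
    by (intro nn_integral_mono pointwise)
  also have "\<dots> = (\<Sum>j. \<integral>\<^sup>+\<xi>. g j \<xi> \<partial>lborel)"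
    by (rule nn_integral_suminf)
      (unfold g_def, intro borel_measurable_times_ennreal borel_measurable_indicator, auto)
  also have "\<dots> = ennreal (\<Sum>j. V * 2^?d * a powr (real ?d - \<beta>) * q^j)"
    unfolding shell using q0 q1 V0
    by (intro suminf_ennreal2) (auto intro!: summable_mult summable_geometric)
  also have "(\<Sum>j. V * 2^?d * a powr (real ?d - \<beta>) * q^j) = V * 2^?d * a powr (real ?d - \<beta>) * (1 / (1 - q))"
    using q0 q1 by (subst suminf_mult) (auto simp: suminf_geometric)
  finally show ?thesis using q1 by (simp add: V_def q_def divide_simps mult_ac)
qed

lemma powr_mult_exp_bounded:
  fixes \<gamma> c :: real
  assumes "\<gamma> \<ge> 0" "c > 0"
  shows "\<exists>C. \<forall>r\<ge>0. r powr \<gamma> * exp (- c * r) \<le> C"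
proof -
  define N where "N = Suc (nat \<lceil>\<gamma>\<rceil>)"
  have N0: "N > 0" and gN: "\<gamma> \<le> real N" unfolding N_def by linarith+
  have "r powr \<gamma> * exp (- c * r) \<le> max 1 ((real N / c)^N)" if r: "r \<ge> 0" for r
  proof (cases "r \<le> 1")
    case True
    have "r powr \<gamma> * exp (- c * r) \<le> 1 * 1"
      using True r assms by (intro mult_mono powr_le1) auto
    thus ?thesis by simp
  next
    case False
    have "r powr \<gamma> \<le> r ^ N"
      using False gN by (simp add: powr_realpow[symmetric] powr_mono)
    also have "r ^ N = (real N / c)^N * (c * r / real N) ^ N"
      using N0 assms by (simp add: power_mult_distrib[symmetric])
    also have "(c * r / real N) ^ N \<le> (1 + c * r / real N) ^ N"
      using r assms by (intro power_mono) auto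
    also have "(1 + c * r / real N) ^ N \<le> exp (c * r)"
      using N0 r assms by (intro exp_ge_one_plus_x_over_n_power_n) (auto intro: order.trans[of _ 0])
    finally have "r powr \<gamma> \<le> (real N / c)^N * exp (c * r)"
      using assms by (simp add: mult_left_mono)
    hence "r powr \<gamma> * exp (- c * r) \<le> (real N / c)^N * exp (c * r) * exp (- c * r)"
      by (intro mult_right_mono) auto
    also have "\<dots> = (real N / c)^N" by (simp add: exp_minus)
    finally show ?thesis by simp
  qed
  thus ?thesis by blast
qed

lemma abs_sum_list_le:
  fixes f g :: "'b \<Rightarrow> real" and B :: real
  assumes "\<And>x. x \<in> set xs \<Longrightarrow> \<bar>f x\<bar> \<le> g x * B"
  shows "\<bar>sum_list (map f xs)\<bar> \<le> sum_list (map g xs) * B"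
  using assms
proof (induction xs)
  case (Cons a xs)
  have "\<bar>f a + sum_list (map f xs)\<bar> \<le> \<bar>f a\<bar> + \<bar>sum_list (map f xs)\<bar>" by (rule abs_triangle_ineq)
  also have "\<dots> \<le> g a * B + sum_list (map g xs) * B" using Cons by (intro add_mono) auto
  finally show ?case by (simp add: distrib_right)
qed simp

lemma powr_le_powr_add_powr:
  fixes R a b g :: real assumes "R > 0" "a \<le> g" "g \<le> b"
  shows "R powr g \<le> R powr a + R powr b"
proof (cases "R \<le> 1")
  case True
  hence "R powr g \<le> R powr a" using assms by (intro powr_mono') auto
  thus ?thesis by (simp add: add_increasing2)
next
  case False
  hence "R powr g \<le> R powr b" using assms by (intro powr_mono) auto
  thus ?thesis by (simp add: add_increasing)
qed

lemma nn_integral_norm_powr_exp_finite: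
  fixes \<alpha> c :: real
  assumes a: "\<alpha> \<ge> 0" and c: "c > 0"
  shows "(\<integral>\<^sup>+\<xi>. ennreal (norm \<xi> powr \<alpha> * exp (- c * norm \<xi>)) \<partial>(lborel::'a::euclidean_space measure)) < \<infinity>"
proof -
  let ?d = "DIM('a)"
  obtain C0 where C0: "\<And>r. r \<ge> 0 \<Longrightarrow> r powr (\<alpha> + ?d + 1) * exp (- c * r) \<le> C0"
    using powr_mult_exp_bounded[of "\<alpha> + ?d + 1" c] a c by auto
  define C where "C = max C0 0"
  have C: "\<And>r. r \<ge> 0 \<Longrightarrow> r powr (\<alpha> + ?d + 1) * exp (- c * r) \<le> C" "C \<ge> 0"
    using C0 by (auto simp: C_def intro: order.trans[OF _ max.cobounded1])
  define tail where "tail \<xi> = indicator {\<xi>::'a. 1 \<le> norm \<xi>} \<xi> * ennreal (norm \<xi> powr (-(real ?d + 1)))"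
    for \<xi>
  have tail_meas: "tail \<in> borel_measurable lborel"
    unfolding tail_def by measurable
  have pointwise: "ennreal (norm \<xi> powr \<alpha> * exp (- c * norm \<xi>))
                     \<le> indicator (cball (0::'a) 1) \<xi> + ennreal C * tail \<xi>" for \<xi> :: 'a
  proof (cases "norm \<xi> \<le> 1")
    case True
    have "norm \<xi> powr \<alpha> * exp (- c * norm \<xi>) \<le> 1 * 1"
      using True a c by (intro mult_mono powr_le1) auto
    hence "ennreal (norm \<xi> powr \<alpha> * exp (- c * norm \<xi>)) \<le> indicator (cball (0::'a) 1) \<xi>"
      using True by (simp add: ennreal_le_1)
    thus ?thesis by (rule order.trans) simp
  next
    case False
    hence r: "norm \<xi> > 1" by simp
    have "norm \<xi> powr \<alpha> * exp (- c * norm \<xi>)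
            = (norm \<xi> powr (\<alpha> + ?d + 1) * exp (- c * norm \<xi>)) * norm \<xi> powr (-(real ?d + 1))"
      using r by (simp add: powr_add[symmetric])
    also have "\<dots> \<le> C * norm \<xi> powr (-(real ?d + 1))"
      using C(1)[of "norm \<xi>"] by (intro mult_right_mono) auto
    finally have "ennreal (norm \<xi> powr \<alpha> * exp (- c * norm \<xi>)) \<le> ennreal C * tail \<xi>"
      using C(2) r by (simp add: tail_def ennreal_mult'[symmetric] ennreal_leI)
    thus ?thesis by (rule order.trans) simp
  qed
  have "(\<integral>\<^sup>+\<xi>. ennreal (norm \<xi> powr \<alpha> * exp (- c * norm \<xi>)) \<partial>(lborel::'a measure))
     \<le> (\<integral>\<^sup>+\<xi>. indicator (cball (0::'a) 1) \<xi> + ennreal C * tail \<xi> \<partial>lborel)"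
    by (intro nn_integral_mono pointwise)
  also have "\<dots> = emeasure lborel (cball (0::'a) 1) + ennreal C * (\<integral>\<^sup>+\<xi>. tail \<xi> \<partial>lborel)"
  proof -
    have "(\<lambda>\<xi>. indicator (cball (0::'a) 1) \<xi> :: ennreal) \<in> borel_measurable lborel"
      "(\<lambda>\<xi>. ennreal C * tail \<xi>) \<in> borel_measurable lborel"
      using tail_meas by (auto intro: borel_measurable_indicator)
    thus ?thesis
      by (simp only: nn_integral_add nn_integral_cmult[OF tail_meas]) (simp add: nn_integral_indicator)
  qed
  also have "\<dots> < \<infinity>"
  proof -
    have "(\<integral>\<^sup>+\<xi>. tail \<xi> \<partial>lborel) < \<infinity>"
      using nn_integral_norm_powr_tail_le[of "real ?d + 1" 1, where 'a='a]
      by (auto simp: tail_def intro: le_less_trans)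
    thus ?thesis using emeasure_lborel_cball_finite[of "0::'a" 1] by (simp add: ennreal_mult_less_top)
  qed
  finally show ?thesis .
qed

lemma integrable_lborel_translate:
  fixes h :: "'a::euclidean_space \<Rightarrow> 'b::{banach, second_countable_topology}"
  assumes "integrable lborel h"
  shows "integrable lborel (\<lambda>x. h (x + c))"
proof -
  have "integrable (distr lborel borel ((+) c)) h" using assms by (simp add: lborel_distr_plus)
  thus ?thesis
    using integrable_distr_eq[of "(+) c" lborel borel h] borel_measurable_integrable[OF assms]
    by (simp add: add.commute)
qed

lemma integral_lborel_translate:
  fixes h :: "'a::euclidean_space \<Rightarrow> 'b::{banach, second_countable_topology}"
  assumes "integrable lborel h"
  shows "(LINT x|lborel. h (x + c)) = (LINT x|lborel. h x)"
proof -
  have "integral\<^sup>L (distr lborel borel ((+) c)) h = (LINT x|lborel. h (c + x))"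
    using borel_measurable_integrable[OF assms] by (intro integral_distr) auto
  thus ?thesis by (simp add: lborel_distr_plus add.commute)
qed

section \<open>Forward differences\<close>

fun fwd_diff :: "real \<Rightarrow> nat \<Rightarrow> (real \<Rightarrow> real) \<Rightarrow> real \<Rightarrow> real" where
  "fwd_diff t 0 h x = h x"
| "fwd_diff t (Suc k) h x = fwd_diff t k h (x + t) - fwd_diff t k h x"

lemma fwd_diff_shift: "fwd_diff t k h (x + y) = fwd_diff t k (\<lambda>\<tau>. h (\<tau> + y)) x"
proof (induction k arbitrary: x)
  case (Suc k)
  have "fwd_diff t k h (x + t + y) = fwd_diff t k (\<lambda>\<tau>. h (\<tau> + y)) (x + t)" by (rule Suc.IH)
  then show ?case using Suc.IH[of x] by (simp add: algebra_simps)
qed simp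

lemma abs_fwd_diff_le:
  assumes "t \<ge> 0" "\<And>y. x \<le> y \<Longrightarrow> y \<le> x + real k * t \<Longrightarrow> \<bar>h y\<bar> \<le> M"
  shows "\<bar>fwd_diff t k h x\<bar> \<le> 2^k * M"
  using assms(2)
proof (induction k arbitrary: x)
  case (Suc k)
  have "\<bar>fwd_diff t k h (x + t)\<bar> \<le> 2^k * M" "\<bar>fwd_diff t k h x\<bar> \<le> 2^k * M"
    using Suc.prems assms(1) by (intro Suc.IH; auto simp: algebra_simps intro: order.trans)+
  then show ?case by simp
qed simp

lemma fwd_diff_has_real_derivative:
  assumes "\<And>i j. j \<le> k \<Longrightarrow> (G i has_real_derivative G (Suc i) (y + real j * t)) (at (y + real j * t))"
  shows "(fwd_diff t k (G i) has_real_derivative fwd_diff t k (G (Suc i)) y) (at y)"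
  using assms
proof (induction k arbitrary: y)
  case 0
  then show ?case using "0.prems"[of 0 i] by simp
next
  case (Suc k)
  have "(fwd_diff t k (G i) has_real_derivative fwd_diff t k (G (Suc i)) (y + t)) (at (y + t))"
    using Suc.prems[of "Suc _"] by (intro Suc.IH) (auto simp: algebra_simps)
  hence "((\<lambda>x. fwd_diff t k (G i) (x + t)) has_real_derivative fwd_diff t k (G (Suc i)) (y + t)) (at y)"
    by (simp add: DERIV_shift)
  moreover have "(fwd_diff t k (G i) has_real_derivative fwd_diff t k (G (Suc i)) y) (at y)"
    using Suc.prems by (intro Suc.IH) auto
  ultimately show ?case using DERIV_diff by fastforce
qed

lemma abs_fwd_diff_le_deriv:
  assumes "t \<ge> 0"
    and "\<And>i y. x \<le> y \<Longrightarrow> y \<le> x + real k * t \<Longrightarrow> (G i has_real_derivative G (Suc i) y) (at y)"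
    and "\<And>y. x \<le> y \<Longrightarrow> y \<le> x + real k * t \<Longrightarrow> \<bar>G (i + k) y\<bar> \<le> M"
  shows "\<bar>fwd_diff t k (G i) x\<bar> \<le> t^k * M"
  using assms(2,3)
proof (induction k arbitrary: i x)
  case (Suc k)
  show ?case
  proof (cases "t = 0")
    case False
    hence t: "t > 0" using assms(1) by simp
    have der: "(fwd_diff t k (G i) has_real_derivative fwd_diff t k (G (Suc i)) w) (at w)"
      if "x \<le> w" "w \<le> x + t" for w
    proof (rule fwd_diff_has_real_derivative)
      fix i' j assume "j \<le> k"
      hence "0 \<le> real j * t" "real j * t \<le> real k * t" using t by (auto intro: mult_right_mono)
      hence "x \<le> w + real j * t" "w + real j * t \<le> x + real (Suc k) * t"
        using that by (linarith, simp add: distrib_right)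
      thus "(G i' has_real_derivative G (Suc i') (w + real j * t)) (at (w + real j * t))"
        by (intro Suc.prems(1))
    qed
    obtain z where z: "x < z" "z < x + t"
      "fwd_diff t k (G i) (x + t) - fwd_diff t k (G i) x = (x + t - x) * fwd_diff t k (G (Suc i)) z"
      using MVT2[of x "x + t" "fwd_diff t k (G i)" "fwd_diff t k (G (Suc i))"] der t by auto
    have "\<bar>fwd_diff t k (G (Suc i)) z\<bar> \<le> t^k * M"
    proof (rule Suc.IH)
      fix i' y assume "z \<le> y" "y \<le> z + real k * t"
      thus "(G i' has_real_derivative G (Suc i') y) (at y)"
        using z by (intro Suc.prems(1)) (auto simp: algebra_simps)
    next
      fix y assume "z \<le> y" "y \<le> z + real k * t"
      thus "\<bar>G (Suc i + k) y\<bar> \<le> M"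
        using z Suc.prems(2)[of y] by (auto simp: algebra_simps)
    qed
    hence "\<bar>t * fwd_diff t k (G (Suc i)) z\<bar> \<le> t * (t^k * M)"
      using t by (simp add: abs_mult mult_left_mono)
    thus ?thesis using z(3) by simp
  qed simp
qed simp

section \<open>Derivatives of the symbol along a ray\<close>

definition ray_norm :: "'a::euclidean_space \<Rightarrow> 'a \<Rightarrow> real \<Rightarrow> real" where
  "ray_norm \<xi> u \<tau> = norm (\<xi> + \<tau> *\<^sub>R u)"

definition ray_inner :: "'a::euclidean_space \<Rightarrow> 'a \<Rightarrow> real \<Rightarrow> real" where
  "ray_inner \<xi> u \<tau> = (\<xi> + \<tau> *\<^sub>R u) \<bullet> u"

lemma ray_norm_has_real_derivative:
  fixes \<xi> u :: "'a::euclidean_space"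
  assumes nz: "\<xi> + \<tau> *\<^sub>R u \<noteq> 0"
  shows "(ray_norm \<xi> u has_real_derivative (ray_inner \<xi> u \<tau> / ray_norm \<xi> u \<tau>)) (at \<tau>)"
proof -
  have l: "((\<lambda>\<tau>. \<xi> + \<tau> *\<^sub>R u) has_derivative (\<lambda>h. h *\<^sub>R u)) (at \<tau>)"
    by (auto intro!: derivative_eq_intros)
  have "((norm \<circ> (\<lambda>\<tau>. \<xi> + \<tau> *\<^sub>R u)) has_derivative ((\<lambda>y. y \<bullet> sgn (\<xi> + \<tau> *\<^sub>R u)) \<circ> (\<lambda>h. h *\<^sub>R u))) (at \<tau>)"
    by (rule diff_chain_at[OF l has_derivative_norm[OF nz]])
  moreover have "((\<lambda>y. y \<bullet> sgn (\<xi> + \<tau> *\<^sub>R u)) \<circ> (\<lambda>h. h *\<^sub>R u)) = (*) (ray_inner \<xi> u \<tau> / ray_norm \<xi> u \<tau>)"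
    by (auto simp: fun_eq_iff ray_inner_def ray_norm_def sgn_div_norm inner_commute divide_inverse mult_ac)
  moreover have "norm \<circ> (\<lambda>\<tau>. \<xi> + \<tau> *\<^sub>R u) = ray_norm \<xi> u" by (auto simp: fun_eq_iff ray_norm_def)
  ultimately show ?thesis by (simp add: has_field_derivative_def)
qed

lemma ray_inner_has_real_derivative:
  fixes \<xi> u :: "'a::euclidean_space"
  assumes "norm u = 1"
  shows "(ray_inner \<xi> u has_real_derivative 1) (at \<tau>)"
proof -
  have "ray_inner \<xi> u = (\<lambda>\<tau>. \<xi> \<bullet> u + \<tau> * (u \<bullet> u))" by (auto simp: fun_eq_iff ray_inner_def inner_add_left)
  moreover have "u \<bullet> u = 1" using assms by (simp add: norm_eq_sqrt_inner)
  ultimately show ?thesis by (auto intro!: derivative_eq_intros)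
qed

lemma abs_ray_inner_le: "norm u = 1 \<Longrightarrow> \<bar>ray_inner \<xi> u \<tau>\<bar> \<le> ray_norm \<xi> u \<tau>"
  unfolding ray_inner_def ray_norm_def using Cauchy_Schwarz_ineq2[of "\<xi> + \<tau> *\<^sub>R u" u] by simp

text \<open>Along the ray \<open>\<tau> \<mapsto> \<xi> + \<tau> u\<close> write \<open>\<rho> = |\<xi> + \<tau> u|\<close> and \<open>p = (\<xi> + \<tau> u) \<bullet> u\<close>.
  Since \<open>\<rho>' = p / \<rho>\<close> and \<open>p' = 1\<close>, the terms \<open>c \<rho>^\<beta> p^m e^(-2\<pi>\<rho>)\<close>, encoded as triples
  \<open>(c, \<beta>, m)\<close>, are closed under differentiation, and every derivative of
  \<open>\<tau> \<mapsto> |\<xi> + \<tau> u|^\<alpha> e^(-2\<pi>|\<xi> + \<tau> u|)\<close> is a finite sum of them of total degree \<open>\<beta> + m\<close>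
  between \<open>\<alpha> - n\<close> and \<open>\<alpha>\<close>. For \<open>m = 0\<close> the middle term of \<open>ray_term_derivs\<close> has
  coefficient \<open>0\<close>, so the truncated \<open>m - 1\<close> is harmless.\<close>
fun ray_term :: "'a::euclidean_space \<Rightarrow> 'a \<Rightarrow> real \<times> real \<times> nat \<Rightarrow> real \<Rightarrow> real" where
  "ray_term \<xi> u (c, \<beta>, m) \<tau> = c * ray_norm \<xi> u \<tau> powr \<beta> * ray_inner \<xi> u \<tau> ^ m * exp (-2*pi*ray_norm \<xi> u \<tau>)"

fun ray_term_derivs :: "real \<times> real \<times> nat \<Rightarrow> (real \<times> real \<times> nat) list" where
  "ray_term_derivs (c, \<beta>, m) = [(c*\<beta>, \<beta>-2, Suc m), (c*real m, \<beta>, m - 1), (-2*pi*c, \<beta>-1, Suc m)]"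

lemma ray_term_has_real_derivative:
  fixes \<xi> u :: "'a::euclidean_space"
  assumes u: "norm u = 1" and pos: "ray_norm \<xi> u \<tau> > 0"
  shows "(ray_term \<xi> u tr has_real_derivative sum_list (map (\<lambda>tr'. ray_term \<xi> u tr' \<tau>) (ray_term_derivs tr))) (at \<tau>)"
proof -
  obtain c \<beta> m where tr: "tr = (c, \<beta>, m)" by (cases tr) auto
  define R where "R = ray_norm \<xi> u \<tau>"
  define P where "P = ray_inner \<xi> u \<tau>"
  define E where "E = exp (-2*pi*R)"
  have R0: "R > 0" using pos by (simp add: R_def)
  have nz: "\<xi> + \<tau> *\<^sub>R u \<noteq> 0" using pos by (auto simp: ray_norm_def)
  have dR: "(ray_norm \<xi> u has_real_derivative P / R) (at \<tau>)" unfolding P_def R_def by (rule ray_norm_has_real_derivative[OF nz])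
  have dP: "(ray_inner \<xi> u has_real_derivative 1) (at \<tau>)" by (rule ray_inner_has_real_derivative[OF u])
  have dA: "((\<lambda>\<tau>. c * ray_norm \<xi> u \<tau> powr \<beta>) has_real_derivative c * (\<beta> * R powr (\<beta> - of_nat 1) * (P / R))) (at \<tau>)"
    by (intro DERIV_cmult) (unfold R_def, rule DERIV_fun_powr[OF dR[unfolded R_def] pos])
  have dB: "((\<lambda>\<tau>. ray_inner \<xi> u \<tau> ^ m) has_real_derivative of_nat m * (1 * P ^ (m - Suc 0))) (at \<tau>)"
    unfolding P_def by (rule DERIV_power[OF dP])
  have dE: "((\<lambda>\<tau>. exp (-2*pi*ray_norm \<xi> u \<tau>)) has_real_derivative E * (-2*pi*(P/R))) (at \<tau>)"
  proof -
    have dR': "(ray_norm \<xi> u has_real_derivative P / ray_norm \<xi> u \<tau>) (at \<tau>)" using dR by (simp add: R_def)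
    show ?thesis unfolding E_def R_def by (intro DERIV_fun_exp DERIV_cmult dR')
  qed
  have fe: "ray_term \<xi> u tr = (\<lambda>\<tau>. c * ray_norm \<xi> u \<tau> powr \<beta> * ray_inner \<xi> u \<tau> ^ m * exp (-2*pi*ray_norm \<xi> u \<tau>))"
    by (auto simp: tr fun_eq_iff)
  have d: "(ray_term \<xi> u tr has_real_derivative
      (c * R powr \<beta> * P ^ m) * (E * (-2*pi*(P/R))) + (c * R powr \<beta> * (of_nat m * (1 * P ^ (m - Suc 0))) + c * (\<beta> * R powr (\<beta> - of_nat 1) * (P / R)) * P ^ m) * E) (at \<tau>)"
    unfolding fe using DERIV_mult'[OF DERIV_mult'[OF dA dB] dE] unfolding R_def P_def E_def .
  have r1: "R powr (\<beta> - 1) = R powr \<beta> / R" using R0 by (simp add: powr_diff)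
  have r2: "R powr (\<beta> - 2) = R powr \<beta> / R^2" using R0 by (simp add: powr_diff)
  have eq: "(c * R powr \<beta> * P ^ m) * (E * (-2*pi*(P/R))) + (c * R powr \<beta> * (of_nat m * (1 * P ^ (m - Suc 0))) + c * (\<beta> * R powr (\<beta> - of_nat 1) * (P / R)) * P ^ m) * E
     = sum_list (map (\<lambda>tr'. ray_term \<xi> u tr' \<tau>) (ray_term_derivs tr))"
  proof (cases m)
    case 0
    then show ?thesis using R0 by (simp add: tr r1 r2 R_def[symmetric] P_def[symmetric] E_def field_simps power2_eq_square)
  next
    case (Suc m')
    then show ?thesis using R0 by (simp add: tr r1 r2 R_def[symmetric] P_def[symmetric] E_def field_simps power2_eq_square)
  qed
  show ?thesis using d eq by simp
qed

fun ray_terms :: "real \<Rightarrow> nat \<Rightarrow> (real \<times> real \<times> nat) list" where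
  "ray_terms \<alpha> 0 = [(1, \<alpha>, 0)]"
| "ray_terms \<alpha> (Suc n) = concat (map ray_term_derivs (ray_terms \<alpha> n))"

definition ray_deriv :: "real \<Rightarrow> 'a::euclidean_space \<Rightarrow> 'a \<Rightarrow> nat \<Rightarrow> real \<Rightarrow> real" where
  "ray_deriv \<alpha> \<xi> u n \<tau> = sum_list (map (\<lambda>tr. ray_term \<xi> u tr \<tau>) (ray_terms \<alpha> n))"

definition ray_coeff_sum :: "real \<Rightarrow> nat \<Rightarrow> real" where
  "ray_coeff_sum \<alpha> n = sum_list (map (\<lambda>tr. \<bar>fst tr\<bar>) (ray_terms \<alpha> n))"

lemma sum_ray_terms_has_real_derivative:
  fixes \<xi> u :: "'a::euclidean_space"
  assumes u: "norm u = 1" and pos: "ray_norm \<xi> u \<tau> > 0"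
  shows "((\<lambda>\<tau>. sum_list (map (\<lambda>tr. ray_term \<xi> u tr \<tau>) xs)) has_real_derivative
           sum_list (map (\<lambda>tr. ray_term \<xi> u tr \<tau>) (concat (map ray_term_derivs xs)))) (at \<tau>)"
proof (induction xs)
  case Nil
  then show ?case by simp
next
  case (Cons a xs)
  show ?case using DERIV_add[OF ray_term_has_real_derivative[OF u pos, of a] Cons.IH] by simp
qed

lemma ray_deriv_has_real_derivative:
  fixes \<xi> u :: "'a::euclidean_space"
  assumes u: "norm u = 1" and pos: "ray_norm \<xi> u \<tau> > 0"
  shows "(ray_deriv \<alpha> \<xi> u n has_real_derivative ray_deriv \<alpha> \<xi> u (Suc n) \<tau>) (at \<tau>)"
proof -
  have "ray_deriv \<alpha> \<xi> u n = (\<lambda>\<tau>. sum_list (map (\<lambda>tr. ray_term \<xi> u tr \<tau>) (ray_terms \<alpha> n)))"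
    by (simp add: fun_eq_iff ray_deriv_def)
  thus ?thesis using sum_ray_terms_has_real_derivative[OF u pos, of "ray_terms \<alpha> n"] by (simp add: ray_deriv_def)
qed

lemma ray_terms_degree:
  "(c, \<beta>, m) \<in> set (ray_terms \<alpha> n) \<Longrightarrow> \<alpha> - real n \<le> \<beta> + real m \<and> \<beta> + real m \<le> \<alpha>"
proof (induction n arbitrary: c \<beta> m)
  case (Suc n)
  then obtain c' \<beta>' m' where "(c', \<beta>', m') \<in> set (ray_terms \<alpha> n)"
    "(c, \<beta>, m) \<in> set (ray_term_derivs (c', \<beta>', m'))"
    by auto
  with Suc.IH show ?case by (cases m') fastforce+
qed auto

lemma abs_ray_deriv_le:
  fixes \<xi> u :: "'a::euclidean_space"
  assumes u: "norm u = 1" and pos: "ray_norm \<xi> u \<tau> > 0"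
  shows "\<bar>ray_deriv \<alpha> \<xi> u n \<tau>\<bar> \<le> ray_coeff_sum \<alpha> n * ((ray_norm \<xi> u \<tau> powr (\<alpha> - real n) + ray_norm \<xi> u \<tau> powr \<alpha>) * exp (-2*pi*ray_norm \<xi> u \<tau>))"
  unfolding ray_deriv_def ray_coeff_sum_def
proof (rule abs_sum_list_le)
  fix tr assume tr: "tr \<in> set (ray_terms \<alpha> n)"
  obtain c \<beta> m where e: "tr = (c, \<beta>, m)" by (cases tr) auto
  define R where "R = ray_norm \<xi> u \<tau>"
  define E where "E = exp (-2*pi*R)"
  have R0: "R > 0" using pos by (simp add: R_def)
  have deg: "\<alpha> - real n \<le> \<beta> + real m" "\<beta> + real m \<le> \<alpha>" using ray_terms_degree tr e by auto
  have P: "\<bar>ray_inner \<xi> u \<tau>\<bar> \<le> R" using abs_ray_inner_le[OF u] by (simp add: R_def)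
  have "\<bar>ray_term \<xi> u tr \<tau>\<bar> = \<bar>c\<bar> * (R powr \<beta> * \<bar>ray_inner \<xi> u \<tau>\<bar> ^ m * E)"
    by (simp add: e R_def E_def abs_mult power_abs)
  also have "\<dots> \<le> \<bar>c\<bar> * (R powr \<beta> * R ^ m * E)"
    using P by (intro mult_left_mono mult_right_mono power_mono) (auto simp: E_def)
  also have "R powr \<beta> * R ^ m = R powr (\<beta> + real m)"
    using R0 by (simp add: powr_add powr_realpow)
  also have "R powr (\<beta> + real m) \<le> R powr (\<alpha> - real n) + R powr \<alpha>"
    using R0 deg by (intro powr_le_powr_add_powr) auto
  hence "\<bar>c\<bar> * (R powr (\<beta> + real m) * E) \<le> \<bar>c\<bar> * ((R powr (\<alpha> - real n) + R powr \<alpha>) * E)"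
    by (intro mult_left_mono mult_right_mono) (auto simp: E_def)
  finally show "\<bar>ray_term \<xi> u tr \<tau>\<bar> \<le> \<bar>fst tr\<bar> * ((ray_norm \<xi> u \<tau> powr (\<alpha> - real n) + ray_norm \<xi> u \<tau> powr \<alpha>) * exp (-2*pi*ray_norm \<xi> u \<tau>))"
    by (simp add: e R_def E_def)
qed

lemma ray_deriv_0: "ray_deriv \<alpha> \<xi> u 0 \<tau> = norm (\<xi> + \<tau> *\<^sub>R u) powr \<alpha> * exp (-2*pi*norm (\<xi> + \<tau> *\<^sub>R u))"
  by (simp add: ray_deriv_def ray_norm_def)

section \<open>The symbol and its Fourier integral\<close>

definition riesz_poisson_symbol :: "real \<Rightarrow> 'a::euclidean_space \<Rightarrow> real" where
  "riesz_poisson_symbol \<alpha> \<xi> = norm \<xi> powr \<alpha> * exp (- 2 * pi * norm \<xi>)"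

definition fourier_kernel :: "'a::euclidean_space \<Rightarrow> 'a \<Rightarrow> complex" where
  "fourier_kernel s \<xi> = exp (2 * pi * \<i> * complex_of_real (s \<bullet> \<xi>))"

lemma riesz_poisson_eq:
  "riesz_poisson \<alpha> s = (LINT \<xi>|lborel. complex_of_real (riesz_poisson_symbol \<alpha> \<xi>) * fourier_kernel s \<xi>)"
  by (simp add: riesz_poisson_def riesz_poisson_symbol_def fourier_kernel_def)

lemma riesz_poisson_symbol_measurable[measurable]: "riesz_poisson_symbol \<alpha> \<in> borel_measurable borel"
  unfolding riesz_poisson_symbol_def by measurable

lemma fourier_kernel_measurable[measurable]: "fourier_kernel s \<in> borel_measurable borel"
  unfolding fourier_kernel_def by measurable

lemma norm_fourier_kernel[simp]: "norm (fourier_kernel s \<xi>) = 1"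
  by (simp add: fourier_kernel_def norm_exp_eq_Re)

lemma fourier_kernel_add:
  "fourier_kernel s (\<xi> + h) = fourier_kernel s \<xi> * exp (2 * pi * \<i> * complex_of_real (s \<bullet> h))"
  by (simp add: fourier_kernel_def inner_add_right distrib_left exp_add)

lemma fourier_kernel_add_half_period:
  assumes "s \<bullet> h = 1/2"
  shows "fourier_kernel s (\<xi> + h) = - fourier_kernel s \<xi>"
proof -
  have "exp (2 * pi * \<i> * complex_of_real (s \<bullet> h)) = exp (\<i> * of_real pi)"
    unfolding assms by (intro arg_cong[where f=exp]) simp
  thus ?thesis by (simp add: fourier_kernel_add)
qed

lemma abs_riesz_poisson_symbol_le: "\<alpha> \<ge> 0 \<Longrightarrow> \<bar>riesz_poisson_symbol \<alpha> x\<bar> \<le> norm x powr \<alpha>"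
  unfolding riesz_poisson_symbol_def by (simp add: abs_mult mult_left_le)

lemma nn_integral_norm_symbol_kernel_le:
  fixes s :: "'a::euclidean_space"
  assumes a: "\<alpha> \<ge> 0"
  shows "(\<integral>\<^sup>+\<xi>. ennreal (norm (complex_of_real (riesz_poisson_symbol \<alpha> \<xi>) * fourier_kernel s \<xi>)) \<partial>lborel)
      \<le> (\<integral>\<^sup>+\<xi>. ennreal (norm \<xi> powr \<alpha> * exp (-pi*norm \<xi>)) \<partial>(lborel::'a measure))"
proof (rule nn_integral_mono)
  fix \<xi> :: 'a
  have "exp (- 2 * pi * norm \<xi>) \<le> exp (-pi*norm \<xi>)" using pi_gt_zero by simp
  hence "\<bar>riesz_poisson_symbol \<alpha> \<xi>\<bar> \<le> norm \<xi> powr \<alpha> * exp (-pi*norm \<xi>)"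
    unfolding riesz_poisson_symbol_def by (simp add: abs_mult mult_left_mono)
  thus "ennreal (norm (complex_of_real (riesz_poisson_symbol \<alpha> \<xi>) * fourier_kernel s \<xi>)) \<le> ennreal (norm \<xi> powr \<alpha> * exp (-pi*norm \<xi>))"
    by (simp add: norm_mult ennreal_leI)
qed

lemma integrable_symbol_kernel:
  fixes s :: "'a::euclidean_space"
  assumes a: "\<alpha> \<ge> 0"
  shows "integrable lborel (\<lambda>\<xi>. complex_of_real (riesz_poisson_symbol \<alpha> \<xi>) * fourier_kernel s \<xi>)"
proof (rule integrableI_bounded)
  show "(\<integral>\<^sup>+\<xi>. ennreal (norm (complex_of_real (riesz_poisson_symbol \<alpha> \<xi>) * fourier_kernel s \<xi>)) \<partial>lborel) < \<infinity>"
    using nn_integral_norm_symbol_kernel_le[OF a, of s] nn_integral_norm_powr_exp_finite[OF a pi_gt_zero, where 'a='a]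
    by (rule le_less_trans)
qed measurable

lemma norm_riesz_poisson_bounded:
  assumes a: "\<alpha> \<ge> 0"
  shows "\<exists>B. \<forall>s::'a::euclidean_space. norm (riesz_poisson \<alpha> s) \<le> B"
proof -
  define B where "B = (\<integral>\<^sup>+\<xi>. ennreal (norm \<xi> powr \<alpha> * exp (-pi*norm \<xi>)) \<partial>(lborel::'a measure))"
  have "B < \<infinity>" unfolding B_def using a by (intro nn_integral_norm_powr_exp_finite) auto
  then obtain Bf where Bf: "B = ennreal Bf" "Bf \<ge> 0" by (cases B) auto
  have "ennreal (norm (riesz_poisson \<alpha> s)) \<le> B" for s :: 'a
    unfolding riesz_poisson_eq B_def
    using integral_norm_bound_ennreal[OF integrable_symbol_kernel[OF a]] nn_integral_norm_symbol_kernel_le[OF a]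
    by (rule order.trans)
  hence "norm (riesz_poisson \<alpha> s) \<le> Bf" for s :: 'a
    using Bf by (simp add: ennreal_le_iff)
  thus ?thesis by blast
qed

definition symbol_diff :: "real \<Rightarrow> 'a::euclidean_space \<Rightarrow> real \<Rightarrow> nat \<Rightarrow> 'a \<Rightarrow> real" where
  "symbol_diff \<alpha> u t k \<xi> = fwd_diff t k (\<lambda>\<tau>. riesz_poisson_symbol \<alpha> (\<xi> + \<tau> *\<^sub>R u)) 0"

lemma symbol_diff_0: "symbol_diff \<alpha> u t 0 \<xi> = riesz_poisson_symbol \<alpha> \<xi>"
  by (simp add: symbol_diff_def)

lemma symbol_diff_Suc:
  "symbol_diff \<alpha> u t (Suc k) \<xi> = symbol_diff \<alpha> u t k (\<xi> + t *\<^sub>R u) - symbol_diff \<alpha> u t k \<xi>"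
proof -
  have "fwd_diff t k (\<lambda>\<tau>. riesz_poisson_symbol \<alpha> (\<xi> + \<tau> *\<^sub>R u)) (0 + t)
          = fwd_diff t k (\<lambda>\<tau>. riesz_poisson_symbol \<alpha> ((\<xi> + t *\<^sub>R u) + \<tau> *\<^sub>R u)) 0"
    unfolding fwd_diff_shift by (simp add: scaleR_add_left algebra_simps)
  thus ?thesis by (simp add: symbol_diff_def)
qed

lemma integral_symbol_diff:
  fixes s u :: "'a::euclidean_space"
  assumes a: "\<alpha> \<ge> 0" and half: "s \<bullet> (t *\<^sub>R u) = 1/2"
  shows "integrable lborel (\<lambda>\<xi>. complex_of_real (symbol_diff \<alpha> u t k \<xi>) * fourier_kernel s \<xi>) \<and>
    (LINT \<xi>|lborel. complex_of_real (symbol_diff \<alpha> u t k \<xi>) * fourier_kernel s \<xi>)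
      = (-2)^k * riesz_poisson \<alpha> s"
proof (induction k)
  case 0
  then show ?case using integrable_symbol_kernel[OF a] by (simp add: symbol_diff_0 riesz_poisson_eq)
next
  case (Suc k)
  define h where "h = (\<lambda>\<xi>. complex_of_real (symbol_diff \<alpha> u t k \<xi>) * fourier_kernel s \<xi>)"
  have hi: "integrable lborel h" using Suc.IH by (simp add: h_def)
  have eq: "complex_of_real (symbol_diff \<alpha> u t (Suc k) \<xi>) * fourier_kernel s \<xi> = - h (\<xi> + t *\<^sub>R u) - h \<xi>"
    for \<xi>
    by (simp add: h_def symbol_diff_Suc fourier_kernel_add_half_period[OF half] left_diff_distrib)
  have i1: "integrable lborel (\<lambda>\<xi>. h (\<xi> + t *\<^sub>R u))" by (rule integrable_lborel_translate[OF hi])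
  have "(LINT \<xi>|lborel. - h (\<xi> + t *\<^sub>R u) - h \<xi>) = - 2 * (LINT \<xi>|lborel. h \<xi>)"
    using i1 hi integral_lborel_translate[OF hi, of "t *\<^sub>R u"] by simp
  with i1 hi show ?case using Suc.IH by (simp add: eq h_def)
qed

section \<open>Decay of \<open>I^\<alpha>(P)\<close>\<close>

lemma abs_symbol_diff_le_near:
  fixes \<xi> u :: "'a::euclidean_space"
  assumes a: "\<alpha> \<ge> 0" and u: "norm u = 1" and t: "t \<ge> 0"
  shows "\<bar>symbol_diff \<alpha> u t k \<xi>\<bar> \<le> 2^k * (norm \<xi> + real k * t) powr \<alpha>"
  unfolding symbol_diff_def
proof (rule abs_fwd_diff_le[OF t])
  fix y assume y: "0 \<le> y" "y \<le> 0 + real k * t"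
  have "norm (\<xi> + y *\<^sub>R u) \<le> norm \<xi> + y" using norm_triangle_ineq[of \<xi> "y *\<^sub>R u"] u y by simp
  also have "\<dots> \<le> norm \<xi> + real k * t" using y by simp
  finally have n: "norm (\<xi> + y *\<^sub>R u) \<le> norm \<xi> + real k * t" .
  have "\<bar>riesz_poisson_symbol \<alpha> (\<xi> + y *\<^sub>R u)\<bar> \<le> norm (\<xi> + y *\<^sub>R u) powr \<alpha>" by (rule abs_riesz_poisson_symbol_le[OF a])
  also have "\<dots> \<le> (norm \<xi> + real k * t) powr \<alpha>" using n a by (intro powr_mono2) auto
  finally show "\<bar>riesz_poisson_symbol \<alpha> (\<xi> + y *\<^sub>R u)\<bar> \<le> (norm \<xi> + real k * t) powr \<alpha>" .
qed

lemma ray_norm_bounds: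
  fixes \<xi> u :: "'a::euclidean_space"
  assumes "norm u = 1" "0 \<le> y" "2 * y \<le> norm \<xi>"
  shows "norm \<xi> / 2 \<le> ray_norm \<xi> u y \<and> ray_norm \<xi> u y \<le> 2 * norm \<xi>"
proof -
  have "norm \<xi> - y \<le> norm (\<xi> + y *\<^sub>R u)" using norm_triangle_ineq2[of \<xi> "- (y *\<^sub>R u)"] assms by simp
  moreover have "norm (\<xi> + y *\<^sub>R u) \<le> norm \<xi> + y" using norm_triangle_ineq[of \<xi> "y *\<^sub>R u"] assms by simp
  ultimately show ?thesis using assms by (simp add: ray_norm_def)
qed

lemma abs_ray_deriv_le_far:
  fixes \<xi> u :: "'a::euclidean_space"
  assumes a: "0 \<le> \<alpha>" "\<alpha> \<le> real n" and u: "norm u = 1"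
    and R: "0 < norm \<xi>" "norm \<xi> / 2 \<le> ray_norm \<xi> u \<tau>" "ray_norm \<xi> u \<tau> \<le> 2 * norm \<xi>"
  shows "\<bar>ray_deriv \<alpha> \<xi> u n \<tau>\<bar>
           \<le> ray_coeff_sum \<alpha> n * ((norm \<xi> / 2) powr (\<alpha> - real n) + (2 * norm \<xi>) powr \<alpha> * exp (- pi * norm \<xi>))"
proof -
  define R where "R = ray_norm \<xi> u \<tau>"
  have R0: "R > 0" using R unfolding R_def by linarith
  have "R powr (\<alpha> - real n) * exp (-2*pi*R) \<le> R powr (\<alpha> - real n)"
    using R0 by (simp add: mult_left_le)
  also have "\<dots> \<le> (norm \<xi> / 2) powr (\<alpha> - real n)"
    using a R by (intro powr_mono2') (auto simp: R_def)
  finally have near: "R powr (\<alpha> - real n) * exp (-2*pi*R) \<le> (norm \<xi> / 2) powr (\<alpha> - real n)" .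
  have "exp (-2*pi*R) \<le> exp (- pi * norm \<xi>)" using R pi_gt_zero by (simp add: R_def)
  hence "R powr \<alpha> * exp (-2*pi*R) \<le> (2 * norm \<xi>) powr \<alpha> * exp (- pi * norm \<xi>)"
    using R a by (intro mult_mono powr_mono2) (auto simp: R_def)
  with near have "(R powr (\<alpha> - real n) + R powr \<alpha>) * exp (-2*pi*R)
      \<le> (norm \<xi> / 2) powr (\<alpha> - real n) + (2 * norm \<xi>) powr \<alpha> * exp (- pi * norm \<xi>)"
    by (simp add: distrib_right)
  moreover have "ray_coeff_sum \<alpha> n \<ge> 0" unfolding ray_coeff_sum_def by (intro sum_list_nonneg) auto
  ultimately show ?thesis
    using abs_ray_deriv_le[OF u, of \<xi> \<tau> \<alpha> n] R0 unfolding R_def by (meson mult_left_mono order_trans)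
qed

lemma abs_symbol_diff_le_far:
  fixes \<xi> u :: "'a::euclidean_space"
  assumes a: "\<alpha> \<ge> 0" "\<alpha> \<le> real k" and u: "norm u = 1" and t: "t > 0" and k: "k \<ge> 1"
    and far: "2 * real k * t \<le> norm \<xi>"
  shows "\<bar>symbol_diff \<alpha> u t k \<xi>\<bar>
           \<le> t^k * ray_coeff_sum \<alpha> k * 2 powr (real k - \<alpha>) * norm \<xi> powr (-(real k - \<alpha>))
             + t^k * ray_coeff_sum \<alpha> k * 2 powr \<alpha> * (norm \<xi> powr \<alpha> * exp (- pi * norm \<xi>))"
proof -
  have kt: "0 < real k * t" using t k by simp
  hence \<xi>0: "0 < norm \<xi>" using far by linarith
  have bounds: "norm \<xi> / 2 \<le> ray_norm \<xi> u y \<and> ray_norm \<xi> u y \<le> 2 * norm \<xi>"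
    if "0 \<le> y" "y \<le> real k * t" for y
    using that far by (intro ray_norm_bounds u) auto
  have "(\<lambda>\<tau>. riesz_poisson_symbol \<alpha> (\<xi> + \<tau> *\<^sub>R u)) = ray_deriv \<alpha> \<xi> u 0"
    by (simp add: fun_eq_iff ray_deriv_0 riesz_poisson_symbol_def)
  moreover have "\<bar>fwd_diff t k (ray_deriv \<alpha> \<xi> u 0) 0\<bar>
      \<le> t^k * (ray_coeff_sum \<alpha> k * ((norm \<xi> / 2) powr (\<alpha> - real k) + (2 * norm \<xi>) powr \<alpha> * exp (- pi * norm \<xi>)))"
  proof (rule abs_fwd_diff_le_deriv)
    show "0 \<le> t" using t by simp
  next
    fix i y assume "0 \<le> y" "y \<le> 0 + real k * t"
    thus "(ray_deriv \<alpha> \<xi> u i has_real_derivative ray_deriv \<alpha> \<xi> u (Suc i) y) (at y)"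
      using bounds[of y] far kt by (intro ray_deriv_has_real_derivative u) auto
  next
    fix y assume "0 \<le> y" "y \<le> 0 + real k * t"
    thus "\<bar>ray_deriv \<alpha> \<xi> u (0 + k) y\<bar>
        \<le> ray_coeff_sum \<alpha> k * ((norm \<xi> / 2) powr (\<alpha> - real k) + (2 * norm \<xi>) powr \<alpha> * exp (- pi * norm \<xi>))"
      using bounds[of y] abs_ray_deriv_le_far[OF a u \<xi>0, of y] by simp
  qed
  ultimately have "\<bar>symbol_diff \<alpha> u t k \<xi>\<bar>
      \<le> t^k * (ray_coeff_sum \<alpha> k * ((norm \<xi> / 2) powr (\<alpha> - real k) + (2 * norm \<xi>) powr \<alpha> * exp (- pi * norm \<xi>)))"
    by (simp add: symbol_diff_def)
  also have "\<dots> = t^k * ray_coeff_sum \<alpha> k * 2 powr (real k - \<alpha>) * norm \<xi> powr (-(real k - \<alpha>))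
             + t^k * ray_coeff_sum \<alpha> k * 2 powr \<alpha> * (norm \<xi> powr \<alpha> * exp (- pi * norm \<xi>))"
    using powr_add[of 2 "\<alpha> - real k" "real k - \<alpha>"]
    by (simp add: powr_divide powr_mult powr_minus_divide field_simps)
  finally show ?thesis .
qed

lemma nn_integral_ball_tail_exp_le:
  fixes a \<beta> c1 c2 c3 :: real
  assumes a: "a > 0" and \<beta>: "\<beta> > real DIM('a::euclidean_space)"
  shows "(\<integral>\<^sup>+\<xi>. ennreal c1 * indicator (ball (0::'a) a) \<xi>
             + ennreal c2 * (indicator {\<xi>. a \<le> norm \<xi>} \<xi> * ennreal (norm \<xi> powr (-\<beta>)))
             + ennreal c3 * ennreal (norm \<xi> powr \<alpha> * exp (-pi*norm \<xi>)) \<partial>lborel)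
    \<le> ennreal c1 * ennreal (unit_ball_vol DIM('a) * a ^ DIM('a))
      + ennreal c2 * ennreal (unit_ball_vol DIM('a) * 2^DIM('a) / (1 - 2 powr (real DIM('a) - \<beta>))
                               * a powr (real DIM('a) - \<beta>))
      + ennreal c3 * (\<integral>\<^sup>+\<xi>. ennreal (norm \<xi> powr \<alpha> * exp (-pi*norm \<xi>)) \<partial>(lborel::'a measure))"
proof -
  define tail where "tail \<xi> = indicator {\<xi>::'a. a \<le> norm \<xi>} \<xi> * ennreal (norm \<xi> powr (-\<beta>))" for \<xi>
  define expo where "expo \<xi> = ennreal (norm (\<xi>::'a) powr \<alpha> * exp (-pi*norm \<xi>))" for \<xi>
  have ball: "(\<lambda>\<xi>. indicator (ball (0::'a) a) \<xi> :: ennreal) \<in> borel_measurable lborel"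
    by (intro borel_measurable_indicator) auto
  have tail: "tail \<in> borel_measurable lborel" and expo: "expo \<in> borel_measurable lborel"
    unfolding tail_def expo_def by measurable
  have "(\<integral>\<^sup>+\<xi>. ennreal c1 * indicator (ball (0::'a) a) \<xi> + ennreal c2 * tail \<xi> + ennreal c3 * expo \<xi> \<partial>lborel)
      = ennreal c1 * emeasure lborel (ball (0::'a) a) + ennreal c2 * integral\<^sup>N lborel tail
        + ennreal c3 * integral\<^sup>N lborel expo"
    using ball tail expo
    by (simp add: nn_integral_add nn_integral_cmult nn_integral_indicator borel_measurable_add)
  also have "\<dots> \<le> ennreal c1 * ennreal (unit_ball_vol DIM('a) * a ^ DIM('a))
      + ennreal c2 * ennreal (unit_ball_vol DIM('a) * 2^DIM('a) / (1 - 2 powr (real DIM('a) - \<beta>))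
                               * a powr (real DIM('a) - \<beta>))
      + ennreal c3 * integral\<^sup>N lborel expo"
    using nn_integral_norm_powr_tail_le[OF \<beta> a] a unfolding tail_def
    by (intro add_mono mult_left_mono) (auto simp: emeasure_ball)
  finally show ?thesis by (simp add: tail_def[abs_def] expo_def[abs_def])
qed

lemma nn_integral_symbol_diff_le:
  fixes u :: "'a::euclidean_space"
  assumes a: "\<alpha> > 0" and k: "real DIM('a) + \<alpha> < real k" "k \<ge> 1" and u: "norm u = 1" and t: "t > 0"
  shows "(\<integral>\<^sup>+\<xi>. ennreal \<bar>symbol_diff \<alpha> u t k \<xi>\<bar> \<partial>lborel) \<le>
     ennreal (2^k * (3 * real k * t) powr \<alpha>) * ennreal (unit_ball_vol DIM('a) * (2 * real k * t) ^ DIM('a))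
   + ennreal (t^k * ray_coeff_sum \<alpha> k * 2 powr (real k - \<alpha>))
       * ennreal (unit_ball_vol DIM('a) * 2^DIM('a) / (1 - 2 powr (real DIM('a) - (real k - \<alpha>)))
                  * (2 * real k * t) powr (real DIM('a) - (real k - \<alpha>)))
   + ennreal (t^k * ray_coeff_sum \<alpha> k * 2 powr \<alpha>)
       * (\<integral>\<^sup>+\<xi>. ennreal (norm \<xi> powr \<alpha> * exp (-pi*norm \<xi>)) \<partial>(lborel::'a measure))"
proof -
  define r where "r = 2 * real k * t"
  have r0: "r > 0" and kd: "real DIM('a) < real k - \<alpha>" using k t by (auto simp: r_def)
  define c1 where "c1 = 2^k * (3 * real k * t) powr \<alpha>"
  define c2 where "c2 = t^k * ray_coeff_sum \<alpha> k * 2 powr (real k - \<alpha>)"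
  define c3 where "c3 = t^k * ray_coeff_sum \<alpha> k * 2 powr \<alpha>"
  have "ray_coeff_sum \<alpha> k \<ge> 0" unfolding ray_coeff_sum_def by (intro sum_list_nonneg) auto
  hence c2: "c2 \<ge> 0" and c3: "c3 \<ge> 0" using t by (auto simp: c2_def c3_def)
  have "ennreal \<bar>symbol_diff \<alpha> u t k \<xi>\<bar>
      \<le> ennreal c1 * indicator (ball (0::'a) r) \<xi>
        + ennreal c2 * (indicator {\<xi>. r \<le> norm \<xi>} \<xi> * ennreal (norm \<xi> powr (-(real k - \<alpha>))))
        + ennreal c3 * ennreal (norm \<xi> powr \<alpha> * exp (-pi*norm \<xi>))" for \<xi>
  proof (cases "norm \<xi> < r")
    case True
    have "\<bar>symbol_diff \<alpha> u t k \<xi>\<bar> \<le> 2^k * (norm \<xi> + real k * t) powr \<alpha>"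
      using a u t by (intro abs_symbol_diff_le_near) auto
    also have "\<dots> \<le> c1" unfolding c1_def using True a t
      by (intro mult_left_mono powr_mono2) (auto simp: r_def algebra_simps)
    finally have "ennreal \<bar>symbol_diff \<alpha> u t k \<xi>\<bar> \<le> ennreal c1 * indicator (ball (0::'a) r) \<xi>"
      using True by (simp add: ennreal_leI)
    thus ?thesis by (rule order.trans) (simp add: add.assoc)
  next
    case False
    hence "\<bar>symbol_diff \<alpha> u t k \<xi>\<bar>
        \<le> c2 * norm \<xi> powr (-(real k - \<alpha>)) + c3 * (norm \<xi> powr \<alpha> * exp (-pi*norm \<xi>))"
      using a u t k unfolding c2_def c3_def by (intro abs_symbol_diff_le_far) (auto simp: r_def)
    hence "ennreal \<bar>symbol_diff \<alpha> u t k \<xi>\<bar>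
        \<le> ennreal (c2 * norm \<xi> powr (-(real k - \<alpha>))) + ennreal (c3 * (norm \<xi> powr \<alpha> * exp (-pi*norm \<xi>)))"
      using c2 c3 by (simp add: ennreal_plus[symmetric] del: ennreal_plus)
    thus ?thesis using False c2 c3 by (simp add: ennreal_mult')
  qed
  hence "(\<integral>\<^sup>+\<xi>. ennreal \<bar>symbol_diff \<alpha> u t k \<xi>\<bar> \<partial>lborel)
      \<le> (\<integral>\<^sup>+\<xi>. ennreal c1 * indicator (ball (0::'a) r) \<xi>
        + ennreal c2 * (indicator {\<xi>. r \<le> norm \<xi>} \<xi> * ennreal (norm \<xi> powr (-(real k - \<alpha>))))
        + ennreal c3 * ennreal (norm \<xi> powr \<alpha> * exp (-pi*norm \<xi>)) \<partial>lborel)"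
    by (intro nn_integral_mono)
  also note nn_integral_ball_tail_exp_le[OF r0 kd]
  finally show ?thesis by (simp add: r_def c1_def c2_def c3_def)
qed

text \<open>For \<open>t \<le> 1\<close> each contribution to the \<open>L\<^sub>1\<close> norm of the \<open>k\<close>-th difference is
  of order \<open>t^(d+\<alpha>)\<close>: the first two exactly, the third because \<open>k \<ge> d + \<alpha>\<close>.\<close>
lemma three_term_scaling_le:
  fixes t V K A Bf \<alpha> :: real and k d :: nat
  assumes t: "0 < t" "t \<le> 1" and kd: "real d + \<alpha> \<le> real k" and nn: "V \<ge> 0" "K \<ge> 0" "A \<ge> 0" "Bf \<ge> 0"
  shows "2^k * (3 * real k * t) powr \<alpha> * (V * (2 * real k * t) ^ d)
       + t^k * A * 2 powr (real k - \<alpha>) * (K * (2 * real k * t) powr (real d - (real k - \<alpha>)))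
       + t^k * A * 2 powr \<alpha> * Bf
     \<le> (2^k * (3 * real k) powr \<alpha> * V * (2 * real k)^d
        + A * 2 powr (real k - \<alpha>) * K * (2 * real k) powr (real d - (real k - \<alpha>))
        + A * 2 powr \<alpha> * Bf) * t powr (real d + \<alpha>)"
proof -
  have e1: "2^k * (3 * real k * t) powr \<alpha> * (V * (2 * real k * t) ^ d)
     = 2^k * (3 * real k) powr \<alpha> * V * (2 * real k)^d * t powr (real d + \<alpha>)"
  proof -
    have "(3 * real k * t) powr \<alpha> = (3 * real k) powr \<alpha> * t powr \<alpha>" using t by (simp add: powr_mult)
    moreover have "(2 * real k * t) ^ d = (2 * real k)^d * t^d" by (simp add: power_mult_distrib)
    moreover have "t^d * t powr \<alpha> = t powr (real d + \<alpha>)" using t by (simp add: powr_add powr_realpow)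
    ultimately show ?thesis by (simp add: mult_ac)
  qed
  have e2: "t^k * A * 2 powr (real k - \<alpha>) * (K * (2 * real k * t) powr (real d - (real k - \<alpha>)))
     = A * 2 powr (real k - \<alpha>) * K * (2 * real k) powr (real d - (real k - \<alpha>)) * t powr (real d + \<alpha>)"
  proof -
    have "(2 * real k * t) powr (real d - (real k - \<alpha>)) = (2 * real k) powr (real d - (real k - \<alpha>)) * t powr (real d - (real k - \<alpha>))"
      using t by (simp add: powr_mult)
    moreover have "t^k * t powr (real d - (real k - \<alpha>)) = t powr (real d + \<alpha>)"
      using t by (simp add: powr_add[symmetric] powr_realpow[symmetric])
    ultimately show ?thesis by (simp add: mult_ac)
  qed
  have e3: "t^k * A * 2 powr \<alpha> * Bf \<le> A * 2 powr \<alpha> * Bf * t powr (real d + \<alpha>)"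
  proof -
    have "t^k = t powr real k" using t by (simp add: powr_realpow)
    also have "\<dots> \<le> t powr (real d + \<alpha>)" using t kd by (intro powr_mono') auto
    finally have "t^k \<le> t powr (real d + \<alpha>)" .
    hence "t^k * (A * 2 powr \<alpha> * Bf) \<le> t powr (real d + \<alpha>) * (A * 2 powr \<alpha> * Bf)"
      using nn by (intro mult_right_mono) auto
    thus ?thesis by (simp add: mult_ac)
  qed
  show ?thesis unfolding e1 e2 distrib_right using e3 by linarith
qed

lemma nn_integral_symbol_diff_le_powr:
  assumes a: "\<alpha> > 0" and kd: "real DIM('a::euclidean_space) + \<alpha> < real k"
  shows "\<exists>C\<ge>0. \<forall>(u::'a) t. norm u = 1 \<longrightarrow> 0 < t \<longrightarrow> t \<le> 1 \<longrightarrow>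
           (\<integral>\<^sup>+\<xi>. ennreal \<bar>symbol_diff \<alpha> u t k \<xi>\<bar> \<partial>lborel) \<le> ennreal (C * t powr (real DIM('a) + \<alpha>))"
proof -
  define d where "d = DIM('a)"
  have kd': "real d + \<alpha> < real k" using kd by (simp add: d_def)
  have "real k > 0" using kd a by linarith
  hence k1: "k \<ge> 1" by simp
  define B where "B = (\<integral>\<^sup>+\<xi>. ennreal (norm \<xi> powr \<alpha> * exp (-pi*norm \<xi>)) \<partial>(lborel::'a measure))"
  have "B < \<infinity>" unfolding B_def using a by (intro nn_integral_norm_powr_exp_finite) auto
  then obtain Bf where BBf: "B = ennreal Bf" and Bf0: "Bf \<ge> 0" by (cases B) auto
  define V where "V = unit_ball_vol (real d)"
  have V0: "V \<ge> 0" by (simp add: V_def unit_ball_vol_nonneg)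
  define q where "q = 2 powr (real d - (real k - \<alpha>))"
  have "2 powr (real d - (real k - \<alpha>)) < 2 powr 0" using kd' by (intro powr_less_mono) auto
  hence q1: "q < 1" by (simp add: q_def)
  define K where "K = V * 2^d / (1 - q)"
  have K0: "K \<ge> 0" using V0 q1 by (simp add: K_def)
  define A where "A = ray_coeff_sum \<alpha> k"
  have A0: "A \<ge> 0" unfolding A_def ray_coeff_sum_def by (intro sum_list_nonneg) auto
  define C where "C = 2^k * (3 * real k) powr \<alpha> * V * (2 * real k)^d
        + A * 2 powr (real k - \<alpha>) * K * (2 * real k) powr (real d - (real k - \<alpha>))
        + A * 2 powr \<alpha> * Bf"
  have "(\<integral>\<^sup>+\<xi>. ennreal \<bar>symbol_diff \<alpha> u t k \<xi>\<bar> \<partial>lborel) \<le> ennreal (C * t powr (real d + \<alpha>))"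
    if u1: "norm u = 1" and t0: "0 < t" and t1: "t \<le> 1" for u :: 'a and t
  proof -
    have "(\<integral>\<^sup>+\<xi>. ennreal \<bar>symbol_diff \<alpha> u t k \<xi>\<bar> \<partial>lborel)
       \<le> ennreal (2^k * (3 * real k * t) powr \<alpha>) * ennreal (V * (2 * real k * t) ^ d)
         + ennreal (t^k * A * 2 powr (real k - \<alpha>)) * ennreal (K * (2 * real k * t) powr (real d - (real k - \<alpha>)))
         + ennreal (t^k * A * 2 powr \<alpha>) * ennreal Bf"
      using nn_integral_symbol_diff_le[OF a kd k1 u1 t0, unfolded B_def[symmetric] BBf]
      by (simp add: d_def V_def K_def q_def A_def)
    also have "\<dots> = ennreal (2^k * (3 * real k * t) powr \<alpha> * (V * (2 * real k * t) ^ d)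
         + t^k * A * 2 powr (real k - \<alpha>) * (K * (2 * real k * t) powr (real d - (real k - \<alpha>)))
         + t^k * A * 2 powr \<alpha> * Bf)"
      using V0 K0 A0 Bf0 t0 by (simp add: ennreal_mult'[symmetric] ennreal_plus[symmetric] del: ennreal_plus)
    also have "\<dots> \<le> ennreal (C * t powr (real d + \<alpha>))"
      unfolding C_def using three_term_scaling_le[OF t0 t1 _ V0 K0 A0 Bf0, of d \<alpha> k] kd'
      by (intro ennreal_leI) auto
    finally show ?thesis .
  qed
  moreover have "C \<ge> 0" using V0 K0 A0 Bf0 by (simp add: C_def)
  ultimately show ?thesis unfolding d_def by blast
qed

lemma norm_riesz_poisson_decay:
  assumes a: "\<alpha> > 0"
  shows "\<exists>C. \<forall>s::'a::euclidean_space. 1 \<le> norm s \<longrightarrow>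
           norm (riesz_poisson \<alpha> s) \<le> C * norm s powr (-(real DIM('a) + \<alpha>))"
proof -
  define d where "d = DIM('a)"
  define k where "k = d + nat \<lceil>\<alpha>\<rceil> + 1"
  have "real d + \<alpha> < real k" unfolding k_def by linarith
  then obtain C where C0: "C \<ge> 0" and C: "\<And>u t. norm (u::'a) = 1 \<Longrightarrow> 0 < t \<Longrightarrow> t \<le> 1 \<Longrightarrow>
      (\<integral>\<^sup>+\<xi>. ennreal \<bar>symbol_diff \<alpha> u t k \<xi>\<bar> \<partial>lborel) \<le> ennreal (C * t powr (real d + \<alpha>))"
    using nn_integral_symbol_diff_le_powr[OF a, of k, where 'a='a] unfolding d_def by blast
  have "norm (riesz_poisson \<alpha> s) \<le> C * 2 powr (-(real d + \<alpha>)) / 2^k * norm s powr (-(real d + \<alpha>))"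
    if s1: "1 \<le> norm s" for s :: 'a
  proof -
    define t where "t = 1 / (2 * norm s)"
    define u where "u = (1 / norm s) *\<^sub>R s"
    have s0: "s \<noteq> 0" using s1 by auto
    have t0: "0 < t" and t1: "t \<le> 1" and u1: "norm u = 1"
      using s1 s0 by (simp_all add: t_def u_def divide_simps)
    have "s \<bullet> (t *\<^sub>R u) = 1/2"
      using s0 by (simp add: t_def u_def power2_norm_eq_inner[symmetric] power2_eq_square)
    note diff = integral_symbol_diff[of \<alpha> s t u k, OF _ this]
    have "ennreal (2^k * norm (riesz_poisson \<alpha> s))
        = ennreal (norm (LINT \<xi>|lborel. complex_of_real (symbol_diff \<alpha> u t k \<xi>) * fourier_kernel s \<xi>))"
      using diff a by (simp add: norm_mult norm_power)
    also have "\<dots> \<le> (\<integral>\<^sup>+\<xi>. ennreal (norm (complex_of_real (symbol_diff \<alpha> u t k \<xi>) * fourier_kernel s \<xi>)) \<partial>lborel)"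
      using diff a by (intro integral_norm_bound_ennreal) auto
    also have "\<dots> = (\<integral>\<^sup>+\<xi>. ennreal \<bar>symbol_diff \<alpha> u t k \<xi>\<bar> \<partial>lborel)"
      by (simp add: norm_mult)
    also have "\<dots> \<le> ennreal (C * t powr (real d + \<alpha>))" by (rule C[OF u1 t0 t1])
    finally have "2^k * norm (riesz_poisson \<alpha> s) \<le> C * t powr (real d + \<alpha>)"
      using C0 by (simp add: ennreal_le_iff)
    moreover have "t powr (real d + \<alpha>) = 2 powr (-(real d + \<alpha>)) * norm s powr (-(real d + \<alpha>))"
      using s0 powr_minus_divide[of 2 "real d + \<alpha>"] powr_minus_divide[of "norm s" "real d + \<alpha>"]
      by (simp add: t_def powr_divide powr_mult)
    ultimately have "2^k * norm (riesz_poisson \<alpha> s)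
        \<le> C * 2 powr (-(real d + \<alpha>)) * norm s powr (-(real d + \<alpha>))"
      by (simp add: mult_ac)
    thus ?thesis by (simp add: field_simps)
  qed
  thus ?thesis unfolding d_def by blast
qed

lemma weighted_norm_bound:
  fixes F :: "'a::real_normed_vector \<Rightarrow> 'b::real_normed_vector"
  assumes g: "g > 0"
    and bounded: "\<And>s. norm (F s) \<le> B"
    and decay: "\<And>s. 1 \<le> norm s \<Longrightarrow> norm (F s) \<le> C * norm s powr (- g)"
  shows "(1 + (norm s)\<^sup>2) powr (g / 2) * norm (F s) \<le> 2 powr (g / 2) * max B C"
proof (cases "norm s < 1")
  case True
  have "1 + (norm s)\<^sup>2 \<le> 2" using True by (simp add: abs_square_le_1)
  hence "(1 + (norm s)\<^sup>2) powr (g / 2) \<le> 2 powr (g / 2)" using g by (intro powr_mono2) auto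
  moreover have "norm (F s) \<le> max B C" using bounded[of s] by simp
  ultimately show ?thesis by (intro mult_mono) auto
next
  case False
  hence s1: "1 \<le> norm s" by simp
  have "1 + (norm s)\<^sup>2 \<le> 2 * (norm s)\<^sup>2"
    using one_le_power[OF s1, of 2] by simp
  hence "(1 + (norm s)\<^sup>2) powr (g / 2) \<le> (2 * (norm s)\<^sup>2) powr (g / 2)"
    using g by (intro powr_mono2) auto
  also have "\<dots> = 2 powr (g / 2) * norm s powr g"
  proof -
    have "(norm s)\<^sup>2 = norm s powr 2" using s1 by (simp add: powr_realpow)
    hence "((norm s)\<^sup>2) powr (g / 2) = norm s powr g" by (simp only: powr_powr) simp
    thus ?thesis by (simp add: powr_mult)
  qed
  finally have "(1 + (norm s)\<^sup>2) powr (g / 2) * norm (F s)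
      \<le> (2 powr (g / 2) * norm s powr g) * (C * norm s powr (- g))"
    using decay[OF s1] by (intro mult_mono) auto
  also have "\<dots> = 2 powr (g / 2) * C"
  proof -
    have "s \<noteq> 0" using s1 by (metis norm_zero not_one_le_zero)
    hence "norm s powr g * norm s powr (- g) = 1" by (simp add: powr_add[symmetric])
    thus ?thesis by (simp add: mult_ac)
  qed
  also have "\<dots> \<le> 2 powr (g / 2) * max B C" by simp
  finally show ?thesis .
qed

theorem lemma6p1:
  fixes \<alpha> :: real
  assumes "\<alpha> > 0"
  shows "\<exists>\<sigma>>0. \<exists>C::real. AE s in (lborel :: 'a::euclidean_space measure).
           (1 + (norm s)\<^sup>2) powr ((real DIM('a) + \<sigma>) / 2) * norm (riesz_poisson \<alpha> s) \<le> C"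
proof -
  obtain B where B: "\<And>s::'a. norm (riesz_poisson \<alpha> s) \<le> B"
    using norm_riesz_poisson_bounded[of \<alpha>] assms by auto
  obtain C where C: "\<And>s::'a. 1 \<le> norm s \<Longrightarrow>
      norm (riesz_poisson \<alpha> s) \<le> C * norm s powr (-(real DIM('a) + \<alpha>))"
    using norm_riesz_poisson_decay[OF assms] by blast
  have "real DIM('a) + \<alpha> > 0" using assms by simp
  from weighted_norm_bound[OF this B C]
  show ?thesis using assms by (intro exI[of _ \<alpha>] conjI exI AE_I2) auto
qed

end
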